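(* Let $x \in \mathbb{R}^n$ be the input data and let the coordinate index set $\{1,\dots,n\}$ be partitioned into $L$ nonempty levels; write $V_l \subseteq \mathbb{R}^n$ for the coordinate subspace of level $l$ ($l=1,\dots,L$, level $L$ coarsest, level $1$ finest), so that the $V_l$ are mutually orthogonal and $\mathbb{R}^n=\bigoplus_l V_l$. Let $\Pi_l$ be the orthogonal projection onto $V_l$, and for $v\in\mathbb{R}^n$ write $v_l=\Pi_l v$ and $v_{>l}=\sum_{m>l}\Pi_m v$ (so $v_{>L}=0$). For each $l$ let $P_l:\mathbb{R}^n\to V_l$ be a linear interpolation-prediction operator with $P_l v = P_l(v_{>l})$ for all $v$ (it uses only coordinates of coarser levels), and suppose $\|P_l\|_\infty\le p$ for all $l$, where $\|\cdot\|_\infty$ denotes the operator norm induced by the max-norm, and $p\ge 1$ ($p=1$ for linear interpolation, $p=1.25$ for cubic interpolation). Compression: for $l=L,L-1,\dots,1$, set $y_l = x_l - P_l\hat x_{>l}$, choose a quantized/dequantized value $\hat y_l\in V_l$ with $\|y_l-\hat y_l\|_\infty\le eb$ (where $eb>0$ is the compression error bound), and set $\hat x_l = P_l\hat x_{>l}+\hat y_l$. Progressive retrieval: for each level $l$ let $\tilde y_l\in V_l$ be the value reconstructed from only the loaded bitplanes, and define the information loss $\delta y_l=\hat y_l-\tilde y_l\in V_l$. Reconstruct, for $l=L,\dots,1$, $\tilde x_l = P_l\tilde x_{>l}+\tilde y_l$, and let $\tilde x=\sum_l \tilde x_l$. Then $$\|x-\tilde x\|_\infty \le \sum_{l=0}^{L-1}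 p^{\,l}\,\|\delta y_{l+1}\|_\infty + eb .$$
   Context: This models an interpolation-based progressive lossy compressor: data are split into hierarchical levels (by interpolation stride), each level is predicted by interpolation from already-reconstructed coarser levels, the prediction residual is quantized with pointwise error at most $eb$, and the quantized integers are stored by bitplanes so that a retrieval may load only some bitplanes of each level; $\delta y_l$ is the resulting loss at level $l$ relative to full retrieval. Linear interpolation predicts $y_i=\tfrac12(x_{i-1}+x_{i+1})$ (coefficients with absolute sum $1$), cubic interpolation predicts $y_i=-\tfrac1{16}x_{i-3}+\tfrac9{16}x_{i-1}+\tfrac9{16}x_{i+1}-\tfrac1{16}x_{i+3}$ (absolute sum $1.25$). $\|v\|_\infty$ for a vector is the maximum absolute entry. *)

theory Defs
  imports "HOL-Analysis.Analysis"
begin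

text \<open>Coordinates are indexed by a finite type 'n; the level of coordinate i is lev i
  (levels 1..L). The max-norm is the library's infnorm.\<close>

definition level_space :: "('n::finite \<Rightarrow> nat) \<Rightarrow> nat \<Rightarrow> (real ^ 'n) set" where
  "level_space lev l = {v. \<forall>i. lev i \<noteq> l \<longrightarrow> v $ i = 0}"

definition lvl_proj :: "('n::finite \<Rightarrow> nat) \<Rightarrow> nat \<Rightarrow> real ^ 'n \<Rightarrow> real ^ 'n" where
  "lvl_proj lev l v = (\<chi> i. if lev i = l then v $ i else 0)"

definition coarser :: "nat \<Rightarrow> ('n::finite \<Rightarrow> nat) \<Rightarrow> nat \<Rightarrow> real ^ 'n \<Rightarrow> real ^ 'n" where
  "coarser L lev l v = (\<Sum>m\<in>{l<..L}. lvl_proj lev m v)"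

end

theory Submission
  imports Defs
begin

text \<open>Let e_l = xhat_l - xtil_l be the retrieval error of level l. Subtracting the two
  reconstruction recursions gives e_l = P_l(e_{l+1} + ... + e_L) + \<delta>y_l. The e_m live on
  disjoint coordinates, so the max-norm of their sum is the largest of their max-norms, and
  backward induction from the coarsest level bounds \<parallel>e_l\<parallel> by B_l = \<Sum>_{m \<ge> l} p^(m-l) \<parallel>\<delta>y_m\<parallel>.
  Since p \<ge> 1, B_l grows towards the finest level, so every \<parallel>e_l\<parallel> is at most B_1. Finally, on a
  coordinate of level l the total error is the quantization error (at most eb) plus e_l.\<close>

definition weighted_tail :: "real \<Rightarrow> (nat \<Rightarrow> real) \<Rightarrow> nat \<Rightarrow> nat \<Rightarrow> real" where
  "weighted_tail p d L l = (\<Sum>m\<in>{l..L}. p ^ (m - l) * d m)"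

lemma weighted_tail_nonneg: "p \<ge> 0 \<Longrightarrow> (\<And>m. d m \<ge> 0) \<Longrightarrow> weighted_tail p d L l \<ge> 0"
  unfolding weighted_tail_def by (intro sum_nonneg) auto

lemma weighted_tail_Suc:
  assumes "l \<le> L"
  shows "weighted_tail p d L l = d l + p * weighted_tail p d L (Suc l)"
proof -
  have "p * weighted_tail p d L (Suc l) = (\<Sum>m\<in>{Suc l..L}. p ^ (m - l) * d m)"
    unfolding weighted_tail_def sum_distrib_left
  proof (intro sum.cong)
    fix m
    assume "m \<in> {Suc l..L}"
    then have "m - l = Suc (m - Suc l)"
      by auto
    then show "p * (p ^ (m - Suc l) * d m) = p ^ (m - l) * d m"
      by simp
  qed simp
  moreover have "{l..L} = insert l {Suc l..L}"
    using assms by auto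
  ultimately show ?thesis
    unfolding weighted_tail_def by simp
qed

lemma weighted_tail_antimono:
  assumes "p \<ge> 1" "\<And>m. d m \<ge> 0" "l \<le> k"
  shows "weighted_tail p d L k \<le> weighted_tail p d L l"
proof -
  have "weighted_tail p d L k \<le> (\<Sum>m\<in>{k..L}. p ^ (m - l) * d m)"
    unfolding weighted_tail_def
    using assms by (intro sum_mono mult_right_mono power_increasing) auto
  also have "\<dots> \<le> weighted_tail p d L l"
    unfolding weighted_tail_def
    using assms by (intro sum_mono2) auto
  finally show ?thesis .
qed

lemma weighted_tail_1: "weighted_tail p d L 1 = (\<Sum>l<L. p ^ l * d (l + 1))"
  unfolding weighted_tail_def by (induction L) auto

lemma backward_recursion_bound:
  fixes a d :: "nat \<Rightarrow> real"
  assumes p: "p \<ge> 1" and d: "\<And>m. d m \<ge> 0"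
    and step: "\<And>l c. l \<in> {1..L} \<Longrightarrow> c \<ge> 0 \<Longrightarrow> (\<And>m. m \<in> {l<..L} \<Longrightarrow> a m \<le> c)
                 \<Longrightarrow> a l \<le> d l + p * c"
  shows "l \<in> {1..L} \<Longrightarrow> a l \<le> weighted_tail p d L l"
proof (induction "L - l" arbitrary: l rule: less_induct)
  case less
  have "a m \<le> weighted_tail p d L (Suc l)" if m: "m \<in> {l<..L}" for m
  proof -
    have "a m \<le> weighted_tail p d L m"
      using less.hyps[of m] less.prems m by auto
    also have "\<dots> \<le> weighted_tail p d L (Suc l)"
      using m by (intro weighted_tail_antimono[OF p d]) auto
    finally show ?thesis .
  qed
  moreover have "weighted_tail p d L (Suc l) \<ge> 0"
    using p d by (intro weighted_tail_nonneg) auto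
  ultimately have "a l \<le> d l + p * weighted_tail p d L (Suc l)"
    using step less.prems by blast
  then show ?case
    using weighted_tail_Suc less.prems by auto
qed

lemma infnorm_le_cart: "(\<And>i. \<bar>(x::real ^ 'n) $ i\<bar> \<le> b) \<Longrightarrow> infnorm x \<le> b"
  unfolding infnorm_cart by (rule cSup_least) auto

lemma subspace_level_space: "subspace (level_space lev l)"
  unfolding subspace_def level_space_def by auto

lemma lvl_proj_in_level_space: "lvl_proj lev l v \<in> level_space lev l"
  unfolding lvl_proj_def level_space_def by simp

lemma sum_lvl_proj:
  assumes "finite A" "range lev \<subseteq> A"
  shows "(\<Sum>l\<in>A. lvl_proj lev l v) = v"
proof -
  have "lev i \<in> A" for i
    using assms(2) by auto
  then show ?thesis
    using assms(1) by (simp add: vec_eq_iff sum_component lvl_proj_def)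
qed

lemma sum_level_space_component:
  assumes "finite A" "\<And>m. m \<in> A \<Longrightarrow> f m \<in> level_space lev m"
  shows "(\<Sum>m\<in>A. f m) $ i = (if lev i \<in> A then f (lev i) $ i else 0)"
proof -
  have "(\<Sum>m\<in>A. f m) $ i = (\<Sum>m\<in>A. if m = lev i then f m $ i else 0)"
    unfolding sum_component
    using assms(2) by (intro sum.cong) (auto simp: level_space_def)
  then show ?thesis
    using assms(1) by simp
qed

lemma infnorm_sum_level_space_le:
  assumes "finite A" "c \<ge> 0"
    and "\<And>m. m \<in> A \<Longrightarrow> f m \<in> level_space lev m" "\<And>m. m \<in> A \<Longrightarrow> infnorm (f m) \<le> c"
  shows "infnorm (\<Sum>m\<in>A. f m) \<le> c"
proof (rule infnorm_le_cart)
  fix i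
  have "\<bar>f (lev i) $ i\<bar> \<le> c" if "lev i \<in> A"
    using component_le_infnorm_cart[of "f (lev i)" i] assms(4)[OF that] by linarith
  then show "\<bar>(\<Sum>m\<in>A. f m) $ i\<bar> \<le> c"
    using sum_level_space_component[of A f lev i] assms by auto
qed

lemma infnorm_levelwise_le:
  assumes "range lev \<subseteq> {1..L}" "c \<ge> 0"
    and "\<And>l. l \<in> {1..L} \<Longrightarrow> z l \<in> level_space lev l"
    and "\<And>l. l \<in> {1..L} \<Longrightarrow> infnorm (lvl_proj lev l x - z l) \<le> c"
  shows "infnorm (x - (\<Sum>l\<in>{1..L}. z l)) \<le> c"
proof -
  have "x - (\<Sum>l\<in>{1..L}. z l) = (\<Sum>l\<in>{1..L}. lvl_proj lev l x - z l)"
    using sum_lvl_proj[of "{1..L}" lev x] assms(1) by (simp add: sum_subtractf)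
  also have "infnorm \<dots> \<le> c"
    using assms by (intro infnorm_sum_level_space_le[where lev = lev]
        subspace_diff[OF subspace_level_space] lvl_proj_in_level_space) auto
  finally show ?thesis .
qed

lemma level_recursion_in_level_space:
  assumes "\<And>l v. l \<in> {1..L} \<Longrightarrow> P l v \<in> level_space lev l"
    and "\<And>l. l \<in> {1..L} \<Longrightarrow> y l \<in> level_space lev l"
    and "\<And>l. l \<in> {1..L} \<Longrightarrow> z l = P l (\<Sum>m\<in>{l<..L}. z m) + y l"
    and "l \<in> {1..L}"
  shows "z l \<in> level_space lev l"
  unfolding assms(3)[OF assms(4)]
  by (intro subspace_add[OF subspace_level_space] assms(1,2,4))

lemma level_recursion_diff_le:
  fixes P :: "nat \<Rightarrow> real ^ 'n \<Rightarrow> real ^ 'n" and xhat xtil yhat ytil :: "nat \<Rightarrow> real ^ 'n"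
  assumes p: "p \<ge> 1"
    and P_linear: "\<And>l. l \<in> {1..L} \<Longrightarrow> linear (P l)"
    and P_range: "\<And>l v. l \<in> {1..L} \<Longrightarrow> P l v \<in> level_space lev l"
    and P_norm: "\<And>l v. l \<in> {1..L} \<Longrightarrow> infnorm (P l v) \<le> p * infnorm v"
    and yhat_in: "\<And>l. l \<in> {1..L} \<Longrightarrow> yhat l \<in> level_space lev l"
    and ytil_in: "\<And>l. l \<in> {1..L} \<Longrightarrow> ytil l \<in> level_space lev l"
    and xhat_eq: "\<And>l. l \<in> {1..L} \<Longrightarrow> xhat l = P l (\<Sum>m\<in>{l<..L}. xhat m) + yhat l"
    and xtil_eq: "\<And>l. l \<in> {1..L} \<Longrightarrow> xtil l = P l (\<Sum>m\<in>{l<..L}. xtil m) + ytil l"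
    and l: "l \<in> {1..L}"
  shows "infnorm (xhat l - xtil l) \<le> weighted_tail p (\<lambda>m. infnorm (yhat m - ytil m)) L l"
proof (rule backward_recursion_bound[OF p infnorm_pos_le _ l])
  fix k c
  assume k: "k \<in> {1..L}" and "c \<ge> 0"
    and coarser_le: "\<And>m. m \<in> {k<..L} \<Longrightarrow> infnorm (xhat m - xtil m) \<le> c"
  have err_in: "xhat m - xtil m \<in> level_space lev m" if "m \<in> {1..L}" for m
    using level_recursion_in_level_space[where P = P, OF P_range yhat_in xhat_eq that]
      level_recursion_in_level_space[where P = P, OF P_range ytil_in xtil_eq that]
    by (intro subspace_diff[OF subspace_level_space])
  define S where "S = (\<Sum>m\<in>{k<..L}. xhat m - xtil m)"
  have "xhat k - xtil k = P k S + (yhat k - ytil k)"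
    unfolding S_def sum_subtractf linear_diff[OF P_linear[OF k]]
    using xhat_eq[OF k] xtil_eq[OF k] by simp
  then have "infnorm (xhat k - xtil k) \<le> infnorm (yhat k - ytil k) + infnorm (P k S)"
    using infnorm_triangle by (metis add.commute)
  moreover have "infnorm S \<le> c"
    unfolding S_def using \<open>c \<ge> 0\<close> coarser_le k err_in
    by (intro infnorm_sum_level_space_le[where lev = lev]) auto
  ultimately show "infnorm (xhat k - xtil k) \<le> infnorm (yhat k - ytil k) + p * c"
    using P_norm[OF k, of S] p mult_left_mono[of "infnorm S" c p] by linarith
qed

theorem theorem5p1:
  fixes x :: "real ^ 'n"
    and lev :: "'n \<Rightarrow> nat" and L :: nat
    and P :: "nat \<Rightarrow> real ^ 'n \<Rightarrow> real ^ 'n"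
    and p eb :: real
    and yhat xhat ytil xtil :: "nat \<Rightarrow> real ^ 'n"
  assumes levels: "lev ` UNIV = {1..L}"
    and P_linear: "\<And>l. l \<in> {1..L} \<Longrightarrow> linear (P l)"
    and P_range: "\<And>l v. l \<in> {1..L} \<Longrightarrow> P l v \<in> level_space lev l"
    and P_coarse: "\<And>l v. l \<in> {1..L} \<Longrightarrow> P l v = P l (coarser L lev l v)"
    and P_norm: "\<And>l v. l \<in> {1..L} \<Longrightarrow> infnorm (P l v) \<le> p * infnorm v"
    and p_ge: "p \<ge> 1"
    and eb_pos: "eb > 0"
    and yhat_in: "\<And>l. l \<in> {1..L} \<Longrightarrow> yhat l \<in> level_space lev l"
    and quant: "\<And>l. l \<in> {1..L} \<Longrightarrow>
        infnorm ((lvl_proj lev l x - P l (\<Sum>m\<in>{l<..L}. xhat m)) - yhat l) \<le> eb"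
    and xhat_def: "\<And>l. l \<in> {1..L} \<Longrightarrow> xhat l = P l (\<Sum>m\<in>{l<..L}. xhat m) + yhat l"
    and ytil_in: "\<And>l. l \<in> {1..L} \<Longrightarrow> ytil l \<in> level_space lev l"
    and xtil_def: "\<And>l. l \<in> {1..L} \<Longrightarrow> xtil l = P l (\<Sum>m\<in>{l<..L}. xtil m) + ytil l"
  shows "infnorm (x - (\<Sum>l\<in>{1..L}. xtil l))
           \<le> (\<Sum>l<L. p ^ l * infnorm (yhat (l + 1) - ytil (l + 1))) + eb"
proof -
  define d where "d m = infnorm (yhat m - ytil m)" for m
  define B where "B = weighted_tail p d L 1"
  have "infnorm (lvl_proj lev l x - xtil l) \<le> eb + B" if l: "l \<in> {1..L}" for l
  proof -
    have "lvl_proj lev l x - xtil l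
          = (lvl_proj lev l x - P l (\<Sum>m\<in>{l<..L}. xhat m) - yhat l) + (xhat l - xtil l)"
      using xhat_def[OF l] by simp
    then have "infnorm (lvl_proj lev l x - xtil l)
        \<le> infnorm (lvl_proj lev l x - P l (\<Sum>m\<in>{l<..L}. xhat m) - yhat l) + infnorm (xhat l - xtil l)"
      by (metis infnorm_triangle)
    moreover have "infnorm (xhat l - xtil l) \<le> weighted_tail p d L l"
      unfolding d_def by (rule level_recursion_diff_le[OF p_ge P_linear P_range P_norm
            yhat_in ytil_in xhat_def xtil_def l])
    moreover have "weighted_tail p d L l \<le> B"
      unfolding B_def d_def using l by (intro weighted_tail_antimono[OF p_ge infnorm_pos_le]) auto
    ultimately show ?thesis
      using quant[OF l] by linarith
  qed
  moreover have "B \<ge> 0"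
    unfolding B_def d_def using p_ge by (intro weighted_tail_nonneg infnorm_pos_le) auto
  ultimately have "infnorm (x - (\<Sum>l\<in>{1..L}. xtil l)) \<le> eb + B"
    using levels eb_pos level_recursion_in_level_space[where P = P, OF P_range ytil_in xtil_def]
    by (intro infnorm_levelwise_le) auto
  then show ?thesis
    unfolding B_def d_def weighted_tail_1 by simp
qed

end
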